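(* Let $K$ be an algebraically closed field, $R=K[x_1,\dots,x_N]$, and let $G\subset R$ be a finite set of monomials. Suppose there are subsets $S_0,\dots,S_r$ of $G$ such that (i) $\bigcup_{i=0}^r S_i=G$; (ii) $S_0$ has exactly one element; (iii) the following recursive procedure can always be performed and always comes to an end, regardless of the choice of the indeterminate $z$ and of the index $j$ at each step: 0. Set $T=S_0$. 1. Pick an indeterminate $z$ dividing the only element of $T$. 2. Cancel (remove) all monomials divisible by $z$ from every $S_i$ (and from $G$). 3. If no element of $G$ is left, end. Otherwise pick an index $j$ such that exactly one element is left in $S_j$ (such an index must exist for the procedure to be performable), and set $T$ equal to the current $S_j$. 4. Go to 1. For $i=0,\dots,r$ set $q_i=\sum_{\mu\in S_i}\mu$. Then $$\sqrt{(G)}=\sqrt{(q_0,\dots,q_r)}.$$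
   Context: $(G)$ denotes the ideal of $R$ generated by $G$; $\sqrt{J}$ denotes the radical of an ideal $J$. Condition (iii) means: for every sequence of choices, whenever monomials of $G$ remain after step 2, some $S_j$ has exactly one remaining element, and after finitely many steps all monomials of $G$ have been cancelled. *)

theory Defs
  imports "HOL-Computational_Algebra.Polynomial" "HOL-Library.Poly_Mapping"
begin

definition alg_closed :: "'a::field itself \<Rightarrow> bool" where
  "alg_closed _ \<longleftrightarrow> (\<forall>p::'a poly. degree p > 0 \<longrightarrow> (\<exists>x. poly p x = 0))"

text \<open>Polynomial ring K[x_v : v in 'v]: exponent vectors ('v =>0 nat) to coefficients.
  A monomial is identified with its exponent vector m; as a polynomial it is Poly_Mapping.single m 1.\<close>
type_synonym ('v, 'a) mpoly = "('v \<Rightarrow>\<^sub>0 nat) \<Rightarrow>\<^sub>0 'a"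

definition monom_poly :: "('v \<Rightarrow>\<^sub>0 nat) \<Rightarrow> ('v, 'a::comm_ring_1) mpoly" where
  "monom_poly m = Poly_Mapping.single m 1"

definition ideal_gen :: "'r::comm_ring_1 set \<Rightarrow> 'r set" where
  "ideal_gen A = {p. \<exists>F c. finite F \<and> F \<subseteq> A \<and> p = (\<Sum>a\<in>F. c a * a)}"

definition radical :: "'r::comm_ring_1 set \<Rightarrow> 'r set" where
  "radical I = {f. \<exists>n. f ^ n \<in> I}"

text \<open>Monomials of X not yet cancelled after cancelling all indeterminates in Z.\<close>
definition alive :: "'v set \<Rightarrow> ('v \<Rightarrow>\<^sub>0 nat) set \<Rightarrow> ('v \<Rightarrow>\<^sub>0 nat) set" where
  "alive Z X = {m \<in> X. \<forall>z\<in>Z. Poly_Mapping.lookup m z = 0}"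

text \<open>proc_ok G S r Z t: starting at step 1 with T = {t}, after the indeterminates in Z
  have been cancelled, the procedure can always be performed and always ends,
  whatever choices of z (step 1) and j (step 3) are made. Inductive = finitely many steps.\<close>
inductive proc_ok :: "('v \<Rightarrow>\<^sub>0 nat) set \<Rightarrow> (nat \<Rightarrow> ('v \<Rightarrow>\<^sub>0 nat) set) \<Rightarrow> nat
    \<Rightarrow> 'v set \<Rightarrow> ('v \<Rightarrow>\<^sub>0 nat) \<Rightarrow> bool"
  for G S r where
  step: "\<lbrakk> \<exists>z. Poly_Mapping.lookup t z > 0;
          \<forall>z. Poly_Mapping.lookup t z > 0 \<longrightarrow>
             alive (insert z Z) G = {} \<or>
             ((\<exists>j\<le>r. card (alive (insert z Z) (S j)) = 1) \<and>
              (\<forall>j\<le>r. card (alive (insert z Z) (S j)) = 1 \<longrightarrow>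
                  proc_ok G S r (insert z Z) (the_elem (alive (insert z Z) (S j))))) \<rbrakk>
        \<Longrightarrow> proc_ok G S r Z t"

end

theory Submission
  imports Defs
begin

(* Every q_i lies in (G), which gives one inclusion. For the other, let J_Z be the ideal
   generated by q_0, ..., q_r and the indeterminates in Z (procedure_gens). A monomial
   divisible by some z in Z lies in J_Z, so if exactly one monomial s of S_j survives the
   cancellation of Z, then s = q_j modulo J_Z and s lies in J_Z. Induction along the
   procedure shows: if the current monomial t = prod z^(t_z) lies in rad J_Z then G is
   contained in rad J_Z. Indeed, rad J_Z is the intersection of the radicals of J_Z + (z)
   over the z dividing t, and J_Z + (z) = J_(Z+z) contains either all of G (when everything
   is cancelled) or the survivor of some S_j, to which the induction hypothesis applies.
   Starting with the element of S_0 gives G within rad (q_0, ..., q_r). *)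

(* An ideal of a commutative ring is a submodule of the ring over itself, so ideal_gen is
   the span, and the library's span lemmas apply. *)
interpretation ring_module: module "(*) :: 'a::comm_ring_1 \<Rightarrow> 'a \<Rightarrow> 'a"
  by unfold_locales (simp_all add: algebra_simps)

lemma ideal_gen_eq_span: "ideal_gen A = ring_module.span A"
  unfolding ideal_gen_def ring_module.span_explicit by auto

lemma ideal_gen_dvdI: "a \<in> A \<Longrightarrow> a dvd p \<Longrightarrow> p \<in> ideal_gen A"
  unfolding ideal_gen_eq_span
  by (metis dvdE mult.commute ring_module.span_base ring_module.span_scale)

lemma radicalI: "x \<in> I \<Longrightarrow> x \<in> radical I"
  unfolding radical_def by (auto intro: exI[of _ 1])

lemma radical_powerD: "x ^ n \<in> radical I \<Longrightarrow> x \<in> radical I"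
  unfolding radical_def by (auto simp flip: power_mult)

lemma radical_subspace:
  assumes I: "ring_module.subspace I"
  shows "ring_module.subspace (radical I)"
  unfolding ring_module.subspace_def
proof (intro conjI ballI allI)
  show "0 \<in> radical I"
    using I unfolding radical_def ring_module.subspace_def by (auto intro: exI[of _ 1])
next
  fix c x assume "x \<in> radical I"
  then obtain n where "x ^ n \<in> I" unfolding radical_def by blast
  then have "(c * x) ^ n \<in> I"
    using I unfolding ring_module.subspace_def by (simp add: power_mult_distrib)
  then show "c * x \<in> radical I" unfolding radical_def by blast
next
  fix x y assume "x \<in> radical I" "y \<in> radical I"
  then obtain n m where x: "x ^ n \<in> I" and y: "y ^ m \<in> I" unfolding radical_def by blast
  have "(x + y) ^ (n + m) = (\<Sum>k\<le>n + m. of_nat ((n + m) choose k) * x ^ k * y ^ (n + m - k))"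
    by (rule binomial_ring)
  also have "\<dots> \<in> I"
  proof (rule ring_module.subspace_sum[OF I])
    fix k assume k: "k \<in> {..n + m}"
    have "x ^ k \<in> I \<or> y ^ (n + m - k) \<in> I"
    proof (cases "n \<le> k")
      case True
      then have "x ^ k = x ^ (k - n) * x ^ n" by (simp flip: power_add)
      then show ?thesis using x I unfolding ring_module.subspace_def by auto
    next
      case False
      then have "y ^ (n + m - k) = y ^ (n - k) * y ^ m" by (simp flip: power_add)
      then show ?thesis using y I unfolding ring_module.subspace_def by auto
    qed
    then show "of_nat ((n + m) choose k) * x ^ k * y ^ (n + m - k) \<in> I"
      using I unfolding ring_module.subspace_def by (metis mult.commute mult.assoc)
  qed
  finally show "x + y \<in> radical I" unfolding radical_def by blast
qed

lemma radical_ideal_gen_subspace: "ring_module.subspace (radical (ideal_gen A))"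
  unfolding ideal_gen_eq_span by (intro radical_subspace ring_module.subspace_span)

lemma radical_ideal_gen_subset:
  assumes "B \<subseteq> radical (ideal_gen A)"
  shows "radical (ideal_gen B) \<subseteq> radical (ideal_gen A)"
proof
  fix f assume "f \<in> radical (ideal_gen B)"
  then obtain n where "f ^ n \<in> ideal_gen B" unfolding radical_def by blast
  moreover have "ideal_gen B \<subseteq> radical (ideal_gen A)"
    using assms radical_ideal_gen_subspace unfolding ideal_gen_eq_span[of B]
    by (rule ring_module.span_minimal)
  ultimately show "f \<in> radical (ideal_gen A)" by (blast intro: radical_powerD)
qed

lemma radical_ideal_gen_mono: "A \<subseteq> B \<Longrightarrow> radical (ideal_gen A) \<subseteq> radical (ideal_gen B)"
  unfolding radical_def ideal_gen_eq_span using ring_module.span_mono by blast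

lemma radical_ideal_gen_mult_cases:
  fixes a b :: "'a::comm_ring_1"
  assumes ab: "a * b \<in> radical (ideal_gen A)"
    and fa: "f \<in> radical (ideal_gen (insert a A))" and fb: "f \<in> radical (ideal_gen (insert b A))"
  shows "f \<in> radical (ideal_gen A)"
proof -
  obtain n m where "f ^ n \<in> ring_module.span (insert a A)" "f ^ m \<in> ring_module.span (insert b A)"
    using fa fb unfolding radical_def ideal_gen_eq_span by blast
  then obtain c d where c: "f ^ n - c * a \<in> ring_module.span A" and d: "f ^ m - d * b \<in> ring_module.span A"
    unfolding ring_module.span_breakdown_eq by blast
  have "f ^ (n + m) = f ^ m * (f ^ n - c * a) + c * a * (f ^ m - d * b) + (c * d) * (a * b)"
    \<comment> \<open>the interpreted simp rule scale_scale reassociates products and loops with mult.assoc\<close>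
    by (simp add: power_add algebra_simps del: ring_module.scale_scale)
  also have "\<dots> \<in> radical (ideal_gen A)"
  proof -
    have "f ^ m * (f ^ n - c * a) \<in> radical (ideal_gen A)"
      using c unfolding ideal_gen_eq_span by (intro radicalI ring_module.span_scale)
    moreover have "c * a * (f ^ m - d * b) \<in> radical (ideal_gen A)"
      using d unfolding ideal_gen_eq_span by (intro radicalI ring_module.span_scale)
    moreover have "(c * d) * (a * b) \<in> radical (ideal_gen A)"
      using ab by (rule ring_module.subspace_scale[OF radical_ideal_gen_subspace])
    ultimately show ?thesis by (intro ring_module.subspace_add[OF radical_ideal_gen_subspace])
  qed
  finally show ?thesis by (rule radical_powerD)
qed

lemma radical_ideal_gen_prod_cases:
  assumes "finite X" "prod g X \<in> radical (ideal_gen A)"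
    and "\<And>x. x \<in> X \<Longrightarrow> f \<in> radical (ideal_gen (insert (g x) A))"
  shows "f \<in> radical (ideal_gen A)"
  using assms
proof (induction X arbitrary: A rule: finite_induct)
  case empty
  then have "f * 1 \<in> radical (ideal_gen A)"
    by (intro ring_module.subspace_scale[OF radical_ideal_gen_subspace]) simp
  then show ?case by simp
next
  case (insert x X)
  have "g x * prod g X \<in> radical (ideal_gen A)"
    using insert.hyps insert.prems(1) by simp
  moreover have "f \<in> radical (ideal_gen (insert (g x) A))"
    by (intro insert.prems(2)) simp
  moreover have "f \<in> radical (ideal_gen (insert (prod g X) A))"
  proof (rule insert.IH)
    show "prod g X \<in> radical (ideal_gen (insert (prod g X) A))"
      unfolding ideal_gen_eq_span by (intro radicalI ring_module.span_base insertI1)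
    fix y assume "y \<in> X"
    then have "f \<in> radical (ideal_gen (insert (g y) A))" by (intro insert.prems(2)) simp
    then show "f \<in> radical (ideal_gen (insert (g y) (insert (prod g X) A)))"
      by (rule subsetD[OF radical_ideal_gen_mono, rotated]) blast
  qed
  ultimately show ?case by (rule radical_ideal_gen_mult_cases)
qed

definition var :: "'v \<Rightarrow> ('v, 'a::comm_ring_1) mpoly" where
  "var z = monom_poly (Poly_Mapping.single z 1)"

lemma monom_poly_zero: "monom_poly 0 = (1 :: ('v, 'a::comm_ring_1) mpoly)"
  by (simp add: monom_poly_def)

lemma monom_poly_add: "monom_poly (s + t) = (monom_poly s * monom_poly t :: ('v, 'a::comm_ring_1) mpoly)"
  by (simp add: monom_poly_def mult_single)

lemma monom_poly_sum:
  "finite K \<Longrightarrow> monom_poly (\<Sum>z\<in>K. h z) = (\<Prod>z\<in>K. monom_poly (h z) :: ('v, 'a::comm_ring_1) mpoly)"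
  by (induction K rule: finite_induct) (simp_all add: monom_poly_zero monom_poly_add)

lemma monom_poly_single: "monom_poly (Poly_Mapping.single z n) = (var z ^ n :: ('v, 'a::comm_ring_1) mpoly)"
proof (induction n)
  case 0
  then show ?case by (simp add: monom_poly_zero)
next
  case (Suc n)
  have "Poly_Mapping.single z (Suc n) = Poly_Mapping.single z 1 + Poly_Mapping.single z n"
    by (simp flip: single_add)
  then show ?case using Suc by (simp add: monom_poly_add var_def)
qed

lemma monom_poly_eq_prod_vars:
  "monom_poly t = (\<Prod>z\<in>Poly_Mapping.keys t. var z ^ Poly_Mapping.lookup t z :: ('v, 'a::comm_ring_1) mpoly)"
proof -
  have decomp: "(\<Sum>z\<in>Poly_Mapping.keys t. Poly_Mapping.single z (Poly_Mapping.lookup t z)) = t"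
    by (rule poly_mapping_eqI) (simp add: lookup_sum lookup_single when_def in_keys_iff)
  have "(\<Prod>z\<in>Poly_Mapping.keys t. var z ^ Poly_Mapping.lookup t z :: ('v, 'a) mpoly)
      = monom_poly (\<Sum>z\<in>Poly_Mapping.keys t. Poly_Mapping.single z (Poly_Mapping.lookup t z))"
    by (simp add: monom_poly_sum monom_poly_single)
  then show ?thesis by (simp only: decomp)
qed

lemma var_dvd_monom_poly:
  assumes "Poly_Mapping.lookup \<mu> z \<noteq> 0"
  shows "var z dvd (monom_poly \<mu> :: ('v, 'a::comm_ring_1) mpoly)"
proof -
  have "var z dvd (var z ^ Poly_Mapping.lookup \<mu> z :: ('v, 'a) mpoly)"
    using assms by (simp add: dvd_power)
  also have "\<dots> dvd monom_poly \<mu>"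
    unfolding monom_poly_eq_prod_vars[of \<mu>] using assms by (intro dvd_prodI) (simp_all add: in_keys_iff)
  finally show ?thesis .
qed

definition procedure_gens :: "nat \<Rightarrow> (nat \<Rightarrow> ('v \<Rightarrow>\<^sub>0 nat) set) \<Rightarrow> 'v set \<Rightarrow> ('v, 'a::comm_ring_1) mpoly set"
  where "procedure_gens r S Z = (\<lambda>i. \<Sum>\<mu>\<in>S i. monom_poly \<mu>) ` {..r} \<union> var ` Z"

lemma procedure_gens_insert: "procedure_gens r S (insert z Z) = insert (var z) (procedure_gens r S Z)"
  by (auto simp: procedure_gens_def)

lemma cancelled_monom_in_ideal_gen:
  assumes "\<mu> \<in> M" "\<mu> \<notin> alive Z M"
  shows "(monom_poly \<mu> :: ('v, 'a::comm_ring_1) mpoly) \<in> ideal_gen (procedure_gens r S Z)"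
proof -
  obtain z where "z \<in> Z" "Poly_Mapping.lookup \<mu> z \<noteq> 0"
    using assms unfolding alive_def by auto
  then show ?thesis
    by (intro ideal_gen_dvdI[OF _ var_dvd_monom_poly]) (auto simp: procedure_gens_def)
qed

lemma survivor_in_ideal_gen:
  assumes "j \<le> r" "finite (S j)" "alive Z (S j) = {s}"
  shows "(monom_poly s :: ('v, 'a::comm_ring_1) mpoly) \<in> ideal_gen (procedure_gens r S Z)"
proof -
  let ?q = "\<Sum>\<mu>\<in>S j. monom_poly \<mu> :: ('v, 'a) mpoly"
  let ?rest = "\<Sum>\<mu>\<in>S j - {s}. monom_poly \<mu> :: ('v, 'a) mpoly"
  have "s \<in> S j" using assms(3) unfolding alive_def by auto
  then have "monom_poly s = ?q - ?rest"
    using assms(2) by (simp add: sum.remove)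
  moreover have "?q \<in> ideal_gen (procedure_gens r S Z)"
    using assms(1) unfolding ideal_gen_eq_span by (intro ring_module.span_base) (auto simp: procedure_gens_def)
  moreover have "?rest \<in> ideal_gen (procedure_gens r S Z)"
    unfolding ideal_gen_eq_span
  proof (rule ring_module.span_sum)
    fix \<mu> assume "\<mu> \<in> S j - {s}"
    then show "monom_poly \<mu> \<in> ring_module.span (procedure_gens r S Z)"
      using assms(3) cancelled_monom_in_ideal_gen[of \<mu> "S j" Z] unfolding ideal_gen_eq_span by auto
  qed
  ultimately show ?thesis
    unfolding ideal_gen_eq_span by (simp add: ring_module.span_diff)
qed

lemma sum_monom_poly_in_ideal_gen:
  "M \<subseteq> G \<Longrightarrow> (\<Sum>\<mu>\<in>M. monom_poly \<mu>) \<in> ideal_gen (monom_poly ` G :: ('v, 'a::comm_ring_1) mpoly set)"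
  unfolding ideal_gen_eq_span by (intro ring_module.span_sum ring_module.span_base) auto

lemma radical_ideal_gen_monom_cases:
  assumes "monom_poly t \<in> radical (ideal_gen A)"
    and "\<And>z. z \<in> Poly_Mapping.keys t \<Longrightarrow> f \<in> radical (ideal_gen (insert (var z) A))"
  shows "f \<in> radical (ideal_gen (A :: ('v, 'a::comm_ring_1) mpoly set))"
proof (rule radical_ideal_gen_prod_cases[OF finite_keys])
  show "(\<Prod>z\<in>Poly_Mapping.keys t. var z ^ Poly_Mapping.lookup t z) \<in> radical (ideal_gen A)"
    using assms(1) by (simp only: monom_poly_eq_prod_vars)
  fix z assume z: "z \<in> Poly_Mapping.keys t"
  have "insert (var z) A \<subseteq> radical (ideal_gen (insert (var z ^ Poly_Mapping.lookup t z) A))"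
  proof -
    have "var z ^ Poly_Mapping.lookup t z \<in> radical (ideal_gen (insert (var z ^ Poly_Mapping.lookup t z) A))"
      unfolding ideal_gen_eq_span by (intro radicalI ring_module.span_base insertI1)
    then have "var z \<in> radical (ideal_gen (insert (var z ^ Poly_Mapping.lookup t z) A))"
      by (rule radical_powerD)
    moreover have "A \<subseteq> radical (ideal_gen (insert (var z ^ Poly_Mapping.lookup t z) A))"
      unfolding ideal_gen_eq_span by (auto intro: radicalI ring_module.span_base)
    ultimately show ?thesis by blast
  qed
  then show "f \<in> radical (ideal_gen (insert (var z ^ Poly_Mapping.lookup t z) A))"
    using assms(2)[OF z] radical_ideal_gen_subset by blast
qed

lemma proc_ok_imp_monomials_in_radical:
  assumes "proc_ok G S r Z t" and fin: "\<forall>i\<le>r. finite (S i)"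
    and "(monom_poly t :: ('v, 'a::comm_ring_1) mpoly) \<in> radical (ideal_gen (procedure_gens r S Z))"
  shows "(monom_poly ` G :: ('v, 'a) mpoly set) \<subseteq> radical (ideal_gen (procedure_gens r S Z))"
  using assms(1,3)
proof (induction rule: proc_ok.induct)
  case (step t Z)
  let ?R = "\<lambda>Z. radical (ideal_gen (procedure_gens r S Z)) :: ('v, 'a) mpoly set"
  have cancel: "monom_poly ` G \<subseteq> ?R (insert z Z)" if z: "z \<in> Poly_Mapping.keys t" for z
  proof -
    have "0 < Poly_Mapping.lookup t z" using z by (simp add: in_keys_iff)
    with step.IH consider (all_cancelled) "alive (insert z Z) G = {}"
      | (survivor) j s where "j \<le> r" "alive (insert z Z) (S j) = {s}"
          "monom_poly s \<in> ?R (insert z Z) \<Longrightarrow> monom_poly ` G \<subseteq> ?R (insert z Z)"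
      by (metis card_1_singletonE the_elem_eq)
    then show ?thesis
    proof cases
      case all_cancelled
      show ?thesis
      proof (rule image_subsetI)
        fix \<mu> assume "\<mu> \<in> G"
        then show "monom_poly \<mu> \<in> ?R (insert z Z)"
          using all_cancelled by (intro radicalI cancelled_monom_in_ideal_gen) auto
      qed
    next
      case survivor
      then show ?thesis using fin by (metis survivor_in_ideal_gen radicalI)
    qed
  qed
  show ?case
  proof
    fix p :: "('v, 'a) mpoly" assume p: "p \<in> monom_poly ` G"
    show "p \<in> ?R Z"
    proof (rule radical_ideal_gen_monom_cases[OF step.prems])
      fix z assume "z \<in> Poly_Mapping.keys t"
      then have "monom_poly ` G \<subseteq> ?R (insert z Z)" by (rule cancel)
      then show "p \<in> radical (ideal_gen (insert (var z) (procedure_gens r S Z)))"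
        using p unfolding procedure_gens_insert by blast
    qed
  qed
qed

theorem proposition2:
  fixes G :: "('v::finite \<Rightarrow>\<^sub>0 nat) set"
    and S :: "nat \<Rightarrow> ('v \<Rightarrow>\<^sub>0 nat) set"
    and r :: nat
  assumes K: "alg_closed TYPE('a::field)"
    and finG: "finite G"
    and sub: "\<forall>i\<le>r. S i \<subseteq> G"
    and cover: "(\<Union>i\<le>r. S i) = G"
    and S0: "card (S 0) = 1"
    and proc: "proc_ok G S r {} (the_elem (S 0))"
  shows "radical (ideal_gen (monom_poly ` G :: ('v, 'a) mpoly set))
       = radical (ideal_gen ((\<lambda>i. \<Sum>\<mu>\<in>S i. (monom_poly \<mu> :: ('v, 'a) mpoly)) ` {..r}))"
    (is "radical (ideal_gen ?G) = radical (ideal_gen ?Q)")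
proof
  have gens: "procedure_gens r S {} = ?Q"
    by (simp add: procedure_gens_def)
  obtain t where t: "S 0 = {t}" using S0 by (rule card_1_singletonE)
  have "monom_poly t \<in> ?Q"
    using t by (intro image_eqI[of _ _ 0]) auto
  then have "monom_poly t \<in> radical (ideal_gen ?Q)"
    unfolding ideal_gen_eq_span by (intro radicalI ring_module.span_base)
  moreover have "\<forall>i\<le>r. finite (S i)"
    using sub finG finite_subset by blast
  moreover have "proc_ok G S r {} t"
    using proc t by simp
  ultimately have "?G \<subseteq> radical (ideal_gen ?Q)"
    unfolding gens[symmetric] by (intro proc_ok_imp_monomials_in_radical)
  then show "radical (ideal_gen ?G) \<subseteq> radical (ideal_gen ?Q)"
    by (rule radical_ideal_gen_subset)
next
  have "?Q \<subseteq> radical (ideal_gen ?G)"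
    using sub by (auto intro!: radicalI sum_monom_poly_in_ideal_gen)
  then show "radical (ideal_gen ?Q) \<subseteq> radical (ideal_gen ?G)"
    by (rule radical_ideal_gen_subset)
qed

end
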